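(* Let $x_1,\dots,x_n\in\mathbb{R}^D$ be distinct points, let $\mathbf{f}=(f(x_1),\dots,f(x_n))^\top\in\mathbb{R}^n$ be the values of a function $f$ at these points, and let $\lambda>0$. For each level $l\ge 0$ let $\mathbf{K}^{(l)}\in\mathbb{R}^{n\times n}$ be the Gaussian kernel matrix $[\mathbf{K}^{(l)}]_{ij}=\exp\!\big(-\|x_i-x_j\|^2/(2r_l^2)\big)$ with bandwidth $r_l>0$, let $0<\sigma_{l,n}\le\dots\le\sigma_{l,1}$ be its eigenvalues, and set $\mathbf{P}^{(l)}=\mathbf{K}^{(l)}(\mathbf{K}^{(l)}+\lambda n\mathbf{I})^{-1}$ and $\varepsilon(l)=\sigma_{l,n}/(n\lambda+\sigma_{l,n})$. Let $\hat{\mathbf{f}}^{(0)}\in\mathbb{R}^n$ be the vector of values of the initial (level-$0$) estimator at $x_1,\dots,x_n$, and suppose the Laplacian-pyramid estimators satisfy, at the training points, $\hat{\mathbf{f}}^{(l+1)}=\hat{\mathbf{f}}^{(l)}+\mathbf{P}^{(l)}(\mathbf{f}-\hat{\mathbf{f}}^{(l)})$ for all $l\ge0$ (equivalently $\hat{\mathbf{f}}^{(l+1)}-\mathbf{f}=(\mathbf{I}-\mathbf{P}^{(l)})(\hat{\mathbf{f}}^{(l)}-\mathbf{f})$). Then for every integer $L>0$, $$\|\hat{\mathbf{f}}^{(L+1)}-\mathbf{f}\|\le\prod_{l=0}^{L}(1-\varepsilon(l))\,\|\hat{\mathbf{f}}^{(0)}-\mathbf{f}\|.$$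
   Context: $\|\cdot\|$ is the Euclidean norm on $\mathbb{R}^n$ (and the induced operator norm on matrices). The estimators are those of a Laplacian pyramid formulation of kernel ridge regression with noiseless labels $y_i=f(x_i)$: at each level, kernel ridge regression with kernel $\mathbf{K}^{(l)}$ and regularization $\lambda$ is fit to the current residual $\mathbf{f}-\hat{\mathbf{f}}^{(l)}$ and the fitted values $\mathbf{P}^{(l)}(\mathbf{f}-\hat{\mathbf{f}}^{(l)})$ are added to the estimator. *)

theory Defs
  imports "HOL-Analysis.Analysis"
begin

definition gauss_kernel_matrix :: "('n::finite \<Rightarrow> real^'d) \<Rightarrow> real \<Rightarrow> real^'n^'n" where
  "gauss_kernel_matrix x r = (\<chi> i j. exp (- (norm (x i - x j))\<^sup>2 / (2 * r\<^sup>2)))"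

definition eigenvalues :: "real^'n^'n \<Rightarrow> real set" where
  "eigenvalues A = {\<mu>. \<exists>v. v \<noteq> 0 \<and> A *v v = \<mu> *\<^sub>R v}"

definition min_eigenvalue :: "real^'n^'n \<Rightarrow> real" where
  "min_eigenvalue A = Min (eigenvalues A)"

definition krr_smoother :: "real \<Rightarrow> real^'n::finite^'n \<Rightarrow> real^'n^'n" where
  "krr_smoother lam K = K ** matrix_inv (K + (lam * real CARD('n)) *\<^sub>R mat 1)"

end

theory Submission
  imports Defs
begin

text \<open>
  With \<open>c = n\<lambda>\<close> and \<open>A = K + c I\<close>, each level maps the residual \<open>e\<close> to
  \<open>e - K A\<^sup>-\<^sup>1 e = c A\<^sup>-\<^sup>1 e\<close>. The Gaussian kernel matrix is positive
  semidefinite: after splitting off the factors \<open>exp (-\<parallel>x\<^sub>i\<parallel>\<^sup>2/(2r\<^sup>2))\<close> its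
  entries are \<open>exp (\<langle>x\<^sub>i,x\<^sub>j\<rangle>/r\<^sup>2)\<close>, a series with nonnegative coefficients in the
  polynomial kernels \<open>\<langle>x\<^sub>i,x\<^sub>j\<rangle>\<^sup>k\<close>, which are Gram matrices of tensor powers. Hence its
  smallest eigenvalue \<open>\<sigma> \<ge> 0\<close> is the minimum of its Rayleigh quotient, so
  \<open>\<parallel>A w\<parallel> \<ge> (c + \<sigma>) \<parallel>w\<parallel>\<close> and \<open>\<parallel>c A\<^sup>-\<^sup>1 e\<parallel> \<le> c/(c + \<sigma>) \<parallel>e\<parallel> = (1 - \<epsilon>) \<parallel>e\<parallel>\<close>.
  Iterating over the levels gives the product bound. Distinctness of the points only
  serves to make \<open>\<sigma> > 0\<close>, i.e. the bound nontrivial.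
\<close>

lemma inner_matrix_vector_eq_double_sum:
  fixes A :: "real^'n::finite^'n"
  shows "w \<bullet> (A *v w) = (\<Sum>i\<in>UNIV. \<Sum>j\<in>UNIV. w$i * w$j * A$i$j)"
  by (simp add: inner_vec_def matrix_vector_mult_def sum_distrib_left mult_ac)

lemma inner_power_kernel_nonneg:
  fixes y :: "'n::finite \<Rightarrow> real^'d" and u :: "'n \<Rightarrow> real"
  shows "0 \<le> (\<Sum>i\<in>UNIV. \<Sum>j\<in>UNIV. u i * u j * (y i \<bullet> y j)^k)"
proof -
  define G where "G = PiE {..<k} (\<lambda>_. (UNIV::'d set))"
  define \<phi> where "\<phi> g i = (\<Prod>m<k. y i $ g m)" for g i
  \<comment> \<open>\<open>\<phi> _ i\<close> is the \<open>k\<close>-th tensor power of \<open>y i\<close>, indexed by the multi-indices in \<open>G\<close>.\<close>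
  have tensor_power: "(y i \<bullet> y j)^k = (\<Sum>g\<in>G. \<phi> g i * \<phi> g j)" for i j
  proof -
    have "(y i \<bullet> y j)^k = (\<Prod>m<k. \<Sum>d\<in>UNIV. y i $ d * y j $ d)"
      by (simp add: inner_vec_def)
    also have "\<dots> = (\<Sum>g\<in>G. \<Prod>m<k. y i $ g m * y j $ g m)"
      unfolding G_def by (rule prod_sum_PiE) auto
    also have "\<dots> = (\<Sum>g\<in>G. \<phi> g i * \<phi> g j)"
      by (simp add: \<phi>_def prod.distrib)
    finally show ?thesis .
  qed
  have "(\<Sum>i\<in>UNIV. \<Sum>j\<in>UNIV. u i * u j * (y i \<bullet> y j)^k)
      = (\<Sum>i\<in>UNIV. \<Sum>j\<in>UNIV. \<Sum>g\<in>G. (u i * \<phi> g i) * (u j * \<phi> g j))"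
    by (simp add: tensor_power sum_distrib_left mult_ac)
  also have "\<dots> = (\<Sum>g\<in>G. \<Sum>i\<in>UNIV. \<Sum>j\<in>UNIV. (u i * \<phi> g i) * (u j * \<phi> g j))"
    by (simp only: sum.swap[of _ G])
  also have "\<dots> = (\<Sum>g\<in>G. (\<Sum>i\<in>UNIV. u i * \<phi> g i)\<^sup>2)"
    by (simp add: sum_product power2_eq_square)
  finally show ?thesis
    by (simp add: sum_nonneg)
qed

lemma exp_inner_kernel_nonneg:
  fixes y :: "'n::finite \<Rightarrow> real^'d" and u :: "'n \<Rightarrow> real"
  shows "0 \<le> (\<Sum>i\<in>UNIV. \<Sum>j\<in>UNIV. u i * u j * exp (y i \<bullet> y j))"
proof -
  define F where "F k = (\<Sum>i\<in>UNIV. \<Sum>j\<in>UNIV. u i * u j * ((y i \<bullet> y j)^k /\<^sub>R fact k))" for k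
  have "F sums (\<Sum>i\<in>UNIV. \<Sum>j\<in>UNIV. u i * u j * exp (y i \<bullet> y j))"
    unfolding F_def by (intro sums_sum sums_mult exp_converges)
  moreover have "0 \<le> F k" for k
  proof -
    have "F k = inverse (fact k) * (\<Sum>i\<in>UNIV. \<Sum>j\<in>UNIV. u i * u j * (y i \<bullet> y j)^k)"
      by (simp add: F_def sum_distrib_left mult_ac)
    then show ?thesis
      by (simp add: inner_power_kernel_nonneg)
  qed
  ultimately show ?thesis
    using sums_le[OF _ sums_zero] by blast
qed

lemma gauss_kernel_factor:
  fixes a b :: "real^'d"
  assumes "r \<noteq> 0"
  shows "exp (- (norm (a - b))\<^sup>2 / (2 * r\<^sup>2))
     = exp (- (norm a)\<^sup>2 / (2 * r\<^sup>2)) * exp (- (norm b)\<^sup>2 / (2 * r\<^sup>2))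
       * exp ((a /\<^sub>R r) \<bullet> (b /\<^sub>R r))"
proof -
  have "(norm (a - b))\<^sup>2 = (norm a)\<^sup>2 + (norm b)\<^sup>2 - 2 * (a \<bullet> b)"
    by (simp add: power2_norm_eq_inner inner_diff_left inner_diff_right inner_commute)
  then have "- (norm (a - b))\<^sup>2 / (2 * r\<^sup>2)
      = - (norm a)\<^sup>2 / (2 * r\<^sup>2) + - (norm b)\<^sup>2 / (2 * r\<^sup>2) + (a /\<^sub>R r) \<bullet> (b /\<^sub>R r)"
    using assms by (simp add: field_simps power2_eq_square)
  then show ?thesis
    by (simp only: exp_add)
qed

lemma gauss_kernel_matrix_psd:
  fixes x :: "'n::finite \<Rightarrow> real^'d"
  assumes "r \<noteq> 0"
  shows "0 \<le> w \<bullet> (gauss_kernel_matrix x r *v w)"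
proof -
  define u where "u i = w$i * exp (- (norm (x i))\<^sup>2 / (2 * r\<^sup>2))" for i
  have "w \<bullet> (gauss_kernel_matrix x r *v w)
      = (\<Sum>i\<in>UNIV. \<Sum>j\<in>UNIV. u i * u j * exp ((x i /\<^sub>R r) \<bullet> (x j /\<^sub>R r)))"
    unfolding inner_matrix_vector_eq_double_sum gauss_kernel_matrix_def vec_lambda_beta
      gauss_kernel_factor[OF assms]
    by (simp add: u_def mult_ac)
  then show ?thesis
    using exp_inner_kernel_nonneg[of u "\<lambda>i. x i /\<^sub>R r"] by simp
qed

lemma gauss_kernel_matrix_symmetric:
  "transpose (gauss_kernel_matrix x r) = gauss_kernel_matrix x r"
  by (simp add: transpose_def gauss_kernel_matrix_def vec_eq_iff norm_minus_commute)

lemma symmetric_matrix_inner_commute: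
  fixes K :: "real^'n::finite^'n"
  assumes "transpose K = K"
  shows "(K *v u) \<bullet> v = u \<bullet> (K *v v)"
  by (metis assms dot_lmul_matrix transpose_matrix_vector)

lemma transpose_add_scaleR_mat:
  "transpose (K + c *\<^sub>R mat 1) = transpose K + c *\<^sub>R (mat 1 :: real^'n::finite^'n)"
  by (simp add: transpose_def vec_eq_iff mat_def)

lemma add_scaleR_mat_vector_mult:
  "(K + c *\<^sub>R mat 1) *v w = K *v w + c *\<^sub>R (w :: real^'n::finite)"
  by (simp add: matrix_vector_mult_add_rdistrib scaleR_matrix_vector_assoc[symmetric])

lemma psd_quadratic_form_eq_0_imp_kernel:
  fixes K :: "real^'n::finite^'n"
  assumes sym: "transpose K = K" and psd: "\<And>w. 0 \<le> w \<bullet> (K *v w)"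
    and zero: "v \<bullet> (K *v v) = 0"
  shows "K *v v = 0"
proof (rule ccontr)
  define z where "z = K *v v"
  assume "K *v v \<noteq> 0"
  then have z_pos: "0 < z \<bullet> z"
    by (simp add: z_def)
  define q where "q = z \<bullet> (K *v z)"
  have q_nonneg: "0 \<le> q"
    by (simp add: q_def psd)
  \<comment> \<open>Along \<open>v - t z\<close> the form is negative for small \<open>t > 0\<close>.\<close>
  have along: "(v - t *\<^sub>R z) \<bullet> (K *v (v - t *\<^sub>R z)) = t * (t * q - 2 * (z \<bullet> z))" for t
  proof -
    have "(K *v z) \<bullet> v = z \<bullet> z"
      by (simp add: symmetric_matrix_inner_commute[OF sym] z_def)
    then show ?thesis
      using zero by (simp add: q_def z_def algebra_simps inner_diff_left inner_diff_right
          inner_commute)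
  qed
  define t where "t = (z \<bullet> z) / (q + 1)"
  have q1: "0 < q + 1"
    using q_nonneg by simp
  have "0 < t"
    using z_pos q1 by (simp add: t_def)
  have "t * q = (z \<bullet> z) * (q / (q + 1))"
    by (simp add: t_def)
  also have "\<dots> < (z \<bullet> z) * 2"
    using z_pos q1 by (intro mult_strict_left_mono) (simp_all add: divide_less_eq)
  finally have "t * q < 2 * (z \<bullet> z)"
    by simp
  with \<open>0 < t\<close> have "t * (t * q - 2 * (z \<bullet> z)) < 0"
    by (simp add: mult_pos_neg)
  with psd[of "v - t *\<^sub>R z"] show False
    by (simp add: along)
qed

lemma symmetric_matrix_rayleigh_minimizer:
  fixes K :: "real^'n::finite^'n"
  assumes sym: "transpose K = K"
  obtains v m where "v \<noteq> 0" "K *v v = m *\<^sub>R v" "\<And>w. m * (w \<bullet> w) \<le> w \<bullet> (K *v w)"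
proof -
  have "\<exists>v\<in>sphere 0 1. \<forall>y\<in>sphere 0 1. v \<bullet> (K *v v) \<le> y \<bullet> (K *v y)"
    by (intro continuous_attains_inf compact_sphere continuous_intros)
       (auto intro: linear_continuous_on)
  then obtain v :: "real^'n" where v_unit: "norm v = 1"
    and v_min: "\<And>y. norm y = 1 \<Longrightarrow> v \<bullet> (K *v v) \<le> y \<bullet> (K *v y)"
    by auto
  define m where "m = v \<bullet> (K *v v)"
  have rayleigh: "m * (w \<bullet> w) \<le> w \<bullet> (K *v w)" for w
  proof (cases "w = 0")
    case False
    have "m \<le> (w /\<^sub>R norm w) \<bullet> (K *v (w /\<^sub>R norm w))"
      unfolding m_def using False by (intro v_min) simp
    also have "\<dots> = (w \<bullet> (K *v w)) / (w \<bullet> w)"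
      using False
      by (simp add: matrix_vector_mult_scaleR field_simps power2_eq_square
          flip: power2_norm_eq_inner)
    finally show ?thesis
      using False by (simp add: pos_le_divide_eq)
  qed simp
  let ?K' = "K + (- m) *\<^sub>R mat 1"
  have "?K' *v v = 0"
  proof (rule psd_quadratic_form_eq_0_imp_kernel)
    show "transpose ?K' = ?K'"
      unfolding transpose_add_scaleR_mat sym ..
    show "0 \<le> w \<bullet> (?K' *v w)" for w
      using rayleigh[of w] unfolding add_scaleR_mat_vector_mult
      by (simp add: inner_add_right inner_diff_right)
    show "v \<bullet> (?K' *v v) = 0"
      using v_unit unfolding add_scaleR_mat_vector_mult
      by (simp add: inner_add_right inner_diff_right m_def flip: power2_norm_eq_inner)
  qed
  then have "K *v v + (- m) *\<^sub>R v = 0"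
    by (simp only: add_scaleR_mat_vector_mult)
  then have "K *v v = m *\<^sub>R v"
    by (simp add: algebra_simps)
  moreover have "v \<noteq> 0"
    using v_unit by auto
  ultimately show ?thesis
    using rayleigh that by blast
qed

lemma symmetric_eigenvectors_orthogonal:
  fixes K :: "real^'n::finite^'n"
  assumes "transpose K = K" "K *v u = a *\<^sub>R u" "K *v v = b *\<^sub>R v" "a \<noteq> b"
  shows "u \<bullet> v = 0"
proof -
  have "a * (u \<bullet> v) = b * (u \<bullet> v)"
    using symmetric_matrix_inner_commute[of K u v] assms by simp
  with \<open>a \<noteq> b\<close> show ?thesis
    by simp
qed

lemma finite_eigenvalues_symmetric:
  fixes K :: "real^'n::finite^'n"
  assumes sym: "transpose K = K"
  shows "finite (eigenvalues K)"
proof -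
  define e where "e \<mu> = (SOME u. u \<noteq> 0 \<and> K *v u = \<mu> *\<^sub>R u)" for \<mu>
  have e: "e \<mu> \<noteq> 0 \<and> K *v e \<mu> = \<mu> *\<^sub>R e \<mu>" if "\<mu> \<in> eigenvalues K" for \<mu>
    unfolding e_def by (rule someI_ex) (use that in \<open>auto simp: eigenvalues_def\<close>)
  have inj: "inj_on e (eigenvalues K)"
  proof (rule inj_onI)
    fix a b
    assume a: "a \<in> eigenvalues K" and b: "b \<in> eigenvalues K" and "e a = e b"
    then have "a *\<^sub>R e a = b *\<^sub>R e a"
      using e by metis
    then show "a = b"
      using e[OF a] by (simp add: scaleR_cancel_right)
  qed
  have "pairwise orthogonal (e ` eigenvalues K)"
  proof (clarsimp simp: pairwise_def orthogonal_def)
    fix a b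
    assume "a \<in> eigenvalues K" "b \<in> eigenvalues K" "e a \<noteq> e b"
    then show "e a \<bullet> e b = 0"
      using e symmetric_eigenvectors_orthogonal[OF sym] by metis
  qed
  moreover have "0 \<notin> e ` eigenvalues K"
    using e by auto
  ultimately have "finite (e ` eigenvalues K)"
    using pairwise_orthogonal_independent finiteI_independent by blast
  then show ?thesis
    using inj by (rule finite_imageD)
qed

lemma min_eigenvalue_symmetric:
  fixes K :: "real^'n::finite^'n"
  assumes sym: "transpose K = K"
  shows min_eigenvalue_in_eigenvalues: "min_eigenvalue K \<in> eigenvalues K"
    and min_eigenvalue_le_quadratic_form: "min_eigenvalue K * (w \<bullet> w) \<le> w \<bullet> (K *v w)"
proof -
  obtain v m where v: "v \<noteq> 0" "K *v v = m *\<^sub>R v"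
    and rayleigh: "\<And>w. m * (w \<bullet> w) \<le> w \<bullet> (K *v w)"
    using symmetric_matrix_rayleigh_minimizer[OF sym] by blast
  have "m \<le> \<mu>" if \<mu>: "\<mu> \<in> eigenvalues K" for \<mu>
  proof -
    obtain u where "u \<noteq> 0" "K *v u = \<mu> *\<^sub>R u"
      using \<mu> by (auto simp: eigenvalues_def)
    then show ?thesis
      using rayleigh[of u] by simp
  qed
  moreover have "m \<in> eigenvalues K"
    using v by (auto simp: eigenvalues_def)
  ultimately have "min_eigenvalue K = m"
    unfolding min_eigenvalue_def using finite_eigenvalues_symmetric[OF sym] by (intro Min_eqI)
  with \<open>m \<in> eigenvalues K\<close> rayleigh
  show "min_eigenvalue K \<in> eigenvalues K" "min_eigenvalue K * (w \<bullet> w) \<le> w \<bullet> (K *v w)"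
    by simp_all
qed

lemma min_eigenvalue_nonneg:
  fixes K :: "real^'n::finite^'n"
  assumes "transpose K = K" and "\<And>w. 0 \<le> w \<bullet> (K *v w)"
  shows "0 \<le> min_eigenvalue K"
proof -
  obtain v where "v \<noteq> 0" "K *v v = min_eigenvalue K *\<^sub>R v"
    using min_eigenvalue_in_eigenvalues[OF assms(1)] by (auto simp: eigenvalues_def)
  then have "0 \<le> min_eigenvalue K * (v \<bullet> v)" and "0 < v \<bullet> v"
    using assms(2)[of v] by simp_all
  then show ?thesis
    by (simp add: zero_le_mult_iff)
qed

lemma norm_add_scaleR_mat_vector_ge:
  fixes K :: "real^'n::finite^'n"
  assumes "transpose K = K"
  shows "(min_eigenvalue K + c) * norm w \<le> norm ((K + c *\<^sub>R mat 1) *v w)"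
proof (cases "w = 0")
  case False
  have "(min_eigenvalue K + c) * (norm w)\<^sup>2 \<le> w \<bullet> ((K + c *\<^sub>R mat 1) *v w)"
    using min_eigenvalue_le_quadratic_form[OF assms, of w] unfolding add_scaleR_mat_vector_mult
    by (simp add: power2_norm_eq_inner algebra_simps)
  also have "\<dots> \<le> norm w * norm ((K + c *\<^sub>R mat 1) *v w)"
    by (rule norm_cauchy_schwarz)
  finally show ?thesis
    using False by (simp add: power2_eq_square)
qed simp

lemma invertible_add_scaleR_mat:
  fixes K :: "real^'n::finite^'n"
  assumes "transpose K = K" and pos: "0 < min_eigenvalue K + c"
  shows "invertible (K + c *\<^sub>R mat 1)"
proof -
  have "w = 0" if "(K + c *\<^sub>R mat 1) *v w = 0" for w
  proof -
    have "(min_eigenvalue K + c) * norm w \<le> 0"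
      using norm_add_scaleR_mat_vector_ge[OF assms(1), of c w] unfolding that by simp
    with pos show ?thesis
      by (simp add: mult_le_0_iff)
  qed
  then show ?thesis
    unfolding invertible_left_inverse matrix_left_invertible_ker by blast
qed

lemma matrix_mul_matrix_inv_right:
  assumes "invertible A"
  shows "A ** matrix_inv A = mat 1"
  using assms unfolding invertible_def matrix_inv_def by (rule someI2_ex) simp

lemma residual_eq_scaleR_matrix_inv:
  fixes K :: "real^'n::finite^'n"
  assumes "invertible (K + c *\<^sub>R mat 1)"
  shows "E - (K ** matrix_inv (K + c *\<^sub>R mat 1)) *v E
    = c *\<^sub>R (matrix_inv (K + c *\<^sub>R mat 1) *v E)"
proof -
  define w where "w = matrix_inv (K + c *\<^sub>R mat 1) *v E"
  have "(K + c *\<^sub>R mat 1) *v w = E"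
    by (simp add: w_def matrix_vector_mul_assoc matrix_mul_matrix_inv_right[OF assms])
  then have "E = K *v w + c *\<^sub>R w"
    by (simp add: add_scaleR_mat_vector_mult)
  moreover have "(K ** matrix_inv (K + c *\<^sub>R mat 1)) *v E = K *v w"
    by (simp add: w_def matrix_vector_mul_assoc)
  ultimately show ?thesis
    unfolding w_def[symmetric] by simp
qed

lemma norm_residual_krr_smoother_le:
  fixes K :: "real^'n::finite^'n"
  assumes sym: "transpose K = K" and psd: "\<And>w. 0 \<le> w \<bullet> (K *v w)" and "lam > 0"
  shows "norm (E - krr_smoother lam K *v E)
    \<le> (1 - min_eigenvalue K / (real CARD('n) * lam + min_eigenvalue K)) * norm E"
proof -
  define c where "c = lam * real CARD('n)"
  define \<sigma> where "\<sigma> = min_eigenvalue K"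
  define w where "w = matrix_inv (K + c *\<^sub>R mat 1) *v E"
  have "0 < c" and "0 \<le> \<sigma>"
    using \<open>lam > 0\<close> min_eigenvalue_nonneg[OF sym psd] by (simp_all add: c_def \<sigma>_def)
  then have inv: "invertible (K + c *\<^sub>R mat 1)"
    using invertible_add_scaleR_mat[OF sym] by (simp add: \<sigma>_def)
  have "(\<sigma> + c) * norm w \<le> norm E"
    using norm_add_scaleR_mat_vector_ge[OF sym, of c w]
    by (simp add: \<sigma>_def w_def matrix_vector_mul_assoc matrix_mul_matrix_inv_right[OF inv])
  have "norm (E - krr_smoother lam K *v E) = c * norm w"
    using \<open>0 < c\<close> residual_eq_scaleR_matrix_inv[OF inv, of E]
    by (simp add: krr_smoother_def c_def w_def)
  also have "\<dots> = c / (c + \<sigma>) * ((\<sigma> + c) * norm w)"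
    using \<open>0 < c\<close> \<open>0 \<le> \<sigma>\<close> by (simp add: field_simps)
  also have "\<dots> \<le> c / (c + \<sigma>) * norm E"
    using \<open>0 < c\<close> \<open>0 \<le> \<sigma>\<close> \<open>(\<sigma> + c) * norm w \<le> norm E\<close>
    by (intro mult_left_mono) simp_all
  also have "c / (c + \<sigma>) = 1 - \<sigma> / (real CARD('n) * lam + \<sigma>)"
    using \<open>0 < c\<close> \<open>0 \<le> \<sigma>\<close> by (simp add: c_def field_simps)
  finally show ?thesis
    by (simp add: \<sigma>_def)
qed

lemma iterated_contraction_le:
  fixes a \<rho> :: "nat \<Rightarrow> real"
  assumes "\<And>l. 0 \<le> \<rho> l" and "\<And>l. a (Suc l) \<le> \<rho> l * a l"
  shows "a (Suc M) \<le> (\<Prod>l = 0..M. \<rho> l) * a 0"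
proof (induction M)
  case 0
  then show ?case
    using assms(2)[of 0] by simp
next
  case (Suc M)
  have "a (Suc (Suc M)) \<le> \<rho> (Suc M) * a (Suc M)"
    by (rule assms(2))
  also have "\<dots> \<le> \<rho> (Suc M) * ((\<Prod>l = 0..M. \<rho> l) * a 0)"
    using Suc.IH assms(1) by (rule mult_left_mono)
  also have "\<dots> = (\<Prod>l = 0..Suc M. \<rho> l) * a 0"
    by (simp add: prod.atLeast0_atMost_Suc mult_ac)
  finally show ?case .
qed

theorem theorem1:
  fixes x :: "'n::finite \<Rightarrow> real^'d"
    and f :: "real^'d \<Rightarrow> real"
    and lam :: real
    and r :: "nat \<Rightarrow> real"
    and fhat :: "nat \<Rightarrow> real^'n"
    and L :: nat
  assumes distinct: "inj x"
    and lam_pos: "lam > 0"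
    and r_pos: "\<And>l. r l > 0"
    and rec: "\<And>l. fhat (Suc l) = fhat l
        + krr_smoother lam (gauss_kernel_matrix x (r l)) *v ((\<chi> i. f (x i)) - fhat l)"
    and L_pos: "L > 0"
  shows "norm (fhat (L + 1) - (\<chi> i. f (x i)))
    \<le> (\<Prod>l = 0..L. 1 - min_eigenvalue (gauss_kernel_matrix x (r l))
          / (real CARD('n) * lam + min_eigenvalue (gauss_kernel_matrix x (r l))))
       * norm (fhat 0 - (\<chi> i. f (x i)))"
proof -
  define fv where "fv = (\<chi> i. f (x i))"
  define K where "K l = gauss_kernel_matrix x (r l)" for l
  define \<rho> where "\<rho> l = 1 - min_eigenvalue (K l) / (real CARD('n) * lam + min_eigenvalue (K l))"
    for l
  have sym: "transpose (K l) = K l" for l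
    by (simp add: K_def gauss_kernel_matrix_symmetric)
  have psd: "0 \<le> w \<bullet> (K l *v w)" for l w
    using r_pos[of l] by (simp add: K_def gauss_kernel_matrix_psd)
  have residual:
    "fhat (Suc l) - fv = (fhat l - fv) - krr_smoother lam (K l) *v (fhat l - fv)" for l
    by (simp add: rec K_def fv_def matrix_vector_mult_diff_distrib)
  have "norm (fhat (Suc l) - fv) \<le> \<rho> l * norm (fhat l - fv)" for l
    unfolding residual \<rho>_def by (rule norm_residual_krr_smoother_le[OF sym psd lam_pos])
  moreover have "0 \<le> \<rho> l" for l
    using min_eigenvalue_nonneg[OF sym psd, of l] lam_pos
    by (simp add: \<rho>_def divide_le_eq_1 add_pos_nonneg)
  ultimately have "norm (fhat (Suc L) - fv) \<le> (\<Prod>l = 0..L. \<rho> l) * norm (fhat 0 - fv)"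
    by (intro iterated_contraction_le[where a = "\<lambda>l. norm (fhat l - fv)"])
  then show ?thesis
    by (simp add: \<rho>_def K_def fv_def)
qed

end
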